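(* Let $(A,\cdot,[\,,\,],\varepsilon)$ be an $F$-manifold color algebra and let $\mathfrak B$ be a nondegenerate symmetric bilinear form on $A$ satisfying $\mathfrak B(x\cdot y,z)=\mathfrak B(x,y\cdot z)$ and $\mathfrak B([x,y],z)=\mathfrak B(x,[y,z])$ for all homogeneous $x,y,z\in A$. Then $(A,\cdot,[\,,\,],\varepsilon)$ is a coherence $F$-manifold color algebra, i.e. for all homogeneous $x,y,z,w\in A$: $$P_{x\cdot y}(z,w)=\varepsilon(x,y+z)P_y(z,x\cdot w)+\varepsilon(y,z)P_x(z,y\cdot w),$$ $$P_x(y,z)\cdot w=-\varepsilon(x,y+z)T(y,z)(x\cdot w)+x\cdot T(y,z)(w),$$ where $T(y,z)(w)=-\varepsilon(y,z)[z,y\cdot w]-[y,z\cdot w]+[y\cdot z,w]$.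
   Context: $G$ is an abelian group and $\varepsilon:G\times G\to\mathbb K\setminus\{0\}$ a skew-symmetric bicharacter: $\varepsilon(a,b)\varepsilon(b,a)=1$, $\varepsilon(a,b+c)=\varepsilon(a,b)\varepsilon(a,c)$, $\varepsilon(a+b,c)=\varepsilon(a,c)\varepsilon(b,c)$; $\mathbb K$ algebraically closed of characteristic zero, $A$ finite-dimensional and $G$-graded. For homogeneous $x\in A_a,y\in A_b$, $\varepsilon(x,y)$ means $\varepsilon(a,b)$, $\varepsilon(x,y+z)$ means $\varepsilon(a,b+c)$, etc. An $\varepsilon$-commutative associative algebra is a $G$-graded associative algebra $(A,\cdot)$ with $A_aA_b\subseteq A_{a+b}$ and $x\cdot y=\varepsilon(x,y)y\cdot x$. A Lie color algebra is a $G$-graded space with bilinear $[\,,\,]$, $[A_a,A_b]\subseteq A_{a+b}$, $[x,y]=-\varepsilon(x,y)[y,x]$, $\varepsilon(z,x)[x,[y,z]]+\varepsilon(y,z)[z,[x,y]]+\varepsilon(x,y)[y,[z,x]]=0$. An $F$-manifold color algebra is $(A,\cdot,[\,,\,],\varepsilon)$ with $(A,\cdot,\varepsilon)$ an $\varepsilon$-commutative associative algebra and $(A,[\,,\,],\varepsilon)$ a Lie color algebra such that $P_{x\cdot y}(z,w)=x\cdot P_y(z,w)+\varepsilon(x,y)y\cdot P_x(z,w)$ for all homogeneous $x,y,z,w$, where $P_x(y,z)=[x,y\cdot z]-[x,y]\cdot z-\varepsilon(x,y)y\cdot[x,z]$. A coherence $F$-manifold color algebra is an $F$-manifold color algebra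 satisfying the two identities in the claim. *)

theory Defs
  imports "HOL-Computational_Algebra.Polynomial"
begin

text \<open>The ground field 'k is algebraically closed (characteristic zero is imposed
  by the type class field_char_0 in the theorem).\<close>
definition alg_closed_field :: "'k::field itself \<Rightarrow> bool" where
  "alg_closed_field _ \<longleftrightarrow> (\<forall>p :: 'k poly. degree p \<noteq> 0 \<longrightarrow> (\<exists>x. poly p x = 0))"

definition skew_bicharacter :: "('g::ab_group_add \<Rightarrow> 'g \<Rightarrow> 'k::field) \<Rightarrow> bool" where
  "skew_bicharacter eps \<longleftrightarrow>
     (\<forall>a b. eps a b \<noteq> 0) \<and>
     (\<forall>a b. eps a b * eps b a = 1) \<and>
     (\<forall>a b c. eps a (b + c) = eps a b * eps a c) \<and>
     (\<forall>a b c. eps (a + b) c = eps a c * eps b c)"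

definition fd_graded_space ::
  "('k::field \<Rightarrow> 'v::ab_group_add \<Rightarrow> 'v) \<Rightarrow> ('g::ab_group_add \<Rightarrow> 'v set) \<Rightarrow> bool" where
  "fd_graded_space scale Ag \<longleftrightarrow>
     vector_space scale \<and>
     (\<exists>B. finite B \<and> module.span scale B = UNIV) \<and>
     (\<forall>a. module.subspace scale (Ag a)) \<and>
     (\<forall>x. \<exists>!f. (\<forall>a. f a \<in> Ag a) \<and> finite {a. f a \<noteq> 0} \<and> x = (\<Sum>a\<in>{a. f a \<noteq> 0}. f a))"

definition bilinear_op :: "('k::field \<Rightarrow> 'v::ab_group_add \<Rightarrow> 'v) \<Rightarrow> ('v \<Rightarrow> 'v \<Rightarrow> 'v) \<Rightarrow> bool" where
  "bilinear_op scale m \<longleftrightarrow>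
     (\<forall>x. Vector_Spaces.linear scale scale (m x)) \<and>
     (\<forall>y. Vector_Spaces.linear scale scale (\<lambda>x. m x y))"

definition graded_op :: "('g::ab_group_add \<Rightarrow> 'v set) \<Rightarrow> ('v \<Rightarrow> 'v \<Rightarrow> 'v) \<Rightarrow> bool" where
  "graded_op Ag m \<longleftrightarrow> (\<forall>a b x y. x \<in> Ag a \<longrightarrow> y \<in> Ag b \<longrightarrow> m x y \<in> Ag (a + b))"

definition eps_comm_assoc ::
  "('k::field \<Rightarrow> 'v::ab_group_add \<Rightarrow> 'v) \<Rightarrow> ('g::ab_group_add \<Rightarrow> 'v set) \<Rightarrow> ('g \<Rightarrow> 'g \<Rightarrow> 'k)
    \<Rightarrow> ('v \<Rightarrow> 'v \<Rightarrow> 'v) \<Rightarrow> bool" where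
  "eps_comm_assoc scale Ag eps mul \<longleftrightarrow>
     bilinear_op scale mul \<and> graded_op Ag mul \<and>
     (\<forall>x y z. mul (mul x y) z = mul x (mul y z)) \<and>
     (\<forall>a b x y. x \<in> Ag a \<longrightarrow> y \<in> Ag b \<longrightarrow> mul x y = scale (eps a b) (mul y x))"

definition lie_color ::
  "('k::field \<Rightarrow> 'v::ab_group_add \<Rightarrow> 'v) \<Rightarrow> ('g::ab_group_add \<Rightarrow> 'v set) \<Rightarrow> ('g \<Rightarrow> 'g \<Rightarrow> 'k)
    \<Rightarrow> ('v \<Rightarrow> 'v \<Rightarrow> 'v) \<Rightarrow> bool" where
  "lie_color scale Ag eps br \<longleftrightarrow>
     bilinear_op scale br \<and> graded_op Ag br \<and>
     (\<forall>a b x y. x \<in> Ag a \<longrightarrow> y \<in> Ag b \<longrightarrow> br x y = - scale (eps a b) (br y x)) \<and>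
     (\<forall>a b c x y z. x \<in> Ag a \<longrightarrow> y \<in> Ag b \<longrightarrow> z \<in> Ag c \<longrightarrow>
        scale (eps c a) (br x (br y z)) + scale (eps b c) (br z (br x y))
        + scale (eps a b) (br y (br z x)) = 0)"

definition Pfun ::
  "('k \<Rightarrow> 'v::ab_group_add \<Rightarrow> 'v) \<Rightarrow> ('g \<Rightarrow> 'g \<Rightarrow> 'k) \<Rightarrow> ('v \<Rightarrow> 'v \<Rightarrow> 'v) \<Rightarrow> ('v \<Rightarrow> 'v \<Rightarrow> 'v)
    \<Rightarrow> 'g \<Rightarrow> 'g \<Rightarrow> 'v \<Rightarrow> 'v \<Rightarrow> 'v \<Rightarrow> 'v" where
  "Pfun scale eps mul br a b x y z =
     br x (mul y z) - mul (br x y) z - scale (eps a b) (mul y (br x z))"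

definition Tfun ::
  "('k \<Rightarrow> 'v::ab_group_add \<Rightarrow> 'v) \<Rightarrow> ('g \<Rightarrow> 'g \<Rightarrow> 'k) \<Rightarrow> ('v \<Rightarrow> 'v \<Rightarrow> 'v) \<Rightarrow> ('v \<Rightarrow> 'v \<Rightarrow> 'v)
    \<Rightarrow> 'g \<Rightarrow> 'g \<Rightarrow> 'v \<Rightarrow> 'v \<Rightarrow> 'v \<Rightarrow> 'v" where
  "Tfun scale eps mul br b c y z w =
     - scale (eps b c) (br z (mul y w)) - br y (mul z w) + br (mul y z) w"

definition F_manifold_color ::
  "('k::field \<Rightarrow> 'v::ab_group_add \<Rightarrow> 'v) \<Rightarrow> ('g::ab_group_add \<Rightarrow> 'v set) \<Rightarrow> ('g \<Rightarrow> 'g \<Rightarrow> 'k)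
    \<Rightarrow> ('v \<Rightarrow> 'v \<Rightarrow> 'v) \<Rightarrow> ('v \<Rightarrow> 'v \<Rightarrow> 'v) \<Rightarrow> bool" where
  "F_manifold_color scale Ag eps mul br \<longleftrightarrow>
     eps_comm_assoc scale Ag eps mul \<and> lie_color scale Ag eps br \<and>
     (\<forall>a b c d x y z w. x \<in> Ag a \<longrightarrow> y \<in> Ag b \<longrightarrow> z \<in> Ag c \<longrightarrow> w \<in> Ag d \<longrightarrow>
        Pfun scale eps mul br (a + b) c (mul x y) z w
        = mul x (Pfun scale eps mul br b c y z w)
          + scale (eps a b) (mul y (Pfun scale eps mul br a c x z w)))"

definition coherence_F_manifold_color ::
  "('k::field \<Rightarrow> 'v::ab_group_add \<Rightarrow> 'v) \<Rightarrow> ('g::ab_group_add \<Rightarrow> 'v set) \<Rightarrow> ('g \<Rightarrow> 'g \<Rightarrow> 'k)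
    \<Rightarrow> ('v \<Rightarrow> 'v \<Rightarrow> 'v) \<Rightarrow> ('v \<Rightarrow> 'v \<Rightarrow> 'v) \<Rightarrow> bool" where
  "coherence_F_manifold_color scale Ag eps mul br \<longleftrightarrow>
     F_manifold_color scale Ag eps mul br \<and>
     (\<forall>a b c d x y z w. x \<in> Ag a \<longrightarrow> y \<in> Ag b \<longrightarrow> z \<in> Ag c \<longrightarrow> w \<in> Ag d \<longrightarrow>
        Pfun scale eps mul br (a + b) c (mul x y) z w
        = scale (eps a (b + c)) (Pfun scale eps mul br b c y z (mul x w))
          + scale (eps b c) (Pfun scale eps mul br a c x z (mul y w))) \<and>
     (\<forall>a b c d x y z w. x \<in> Ag a \<longrightarrow> y \<in> Ag b \<longrightarrow> z \<in> Ag c \<longrightarrow> w \<in> Ag d \<longrightarrow>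
        mul (Pfun scale eps mul br a b x y z) w
        = - scale (eps a (b + c)) (Tfun scale eps mul br b c y z (mul x w))
          + mul x (Tfun scale eps mul br b c y z w))"

end

(* By nondegeneracy it suffices to prove both identities after pairing with an arbitrary
   homogeneous u.  Invariance of the form makes P and T adjoint, B(P_x(y,z), v) = B(x, T(y,z)(v)),
   and makes B(P_x(z,w), u) symmetric in w and u up to eps(deg w, deg u).  Paired with u, the
   second identity becomes a relation between B(x, T(y,z)(w u)) and B(P_u(y,z), x w), obtained
   from the F-manifold identity for P_{x u}(y,z); the first identity is then reduced to the
   second, applied to P_x(z,u) w. *)

theory Submission
  imports Defs
begin

locale F_manifold_color_invariant_form = vector_space scale
  for scale :: "'k::field \<Rightarrow> 'v::ab_group_add \<Rightarrow> 'v" +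
  fixes Ag :: "'g::ab_group_add \<Rightarrow> 'v set" and eps :: "'g \<Rightarrow> 'g \<Rightarrow> 'k"
    and mul br :: "'v \<Rightarrow> 'v \<Rightarrow> 'v" and Bf :: "'v \<Rightarrow> 'v \<Rightarrow> 'k"
  assumes subspace_Ag: "subspace (Ag a)"
    and homogeneous_decomposition:
      "\<exists>f. (\<forall>a. f a \<in> Ag a) \<and> finite {a. f a \<noteq> 0} \<and> x = (\<Sum>a\<in>{a. f a \<noteq> 0}. f a)"
    and eps_skew_bicharacter: "skew_bicharacter eps"
    and F_manifold: "F_manifold_color scale Ag eps mul br"
    and Bf_linear_right: "Vector_Spaces.linear scale (*) (Bf x)"
    and Bf_linear_left: "Vector_Spaces.linear scale (*) (\<lambda>x. Bf x y)"
    and Bf_sym: "Bf x y = Bf y x"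
    and Bf_nondegenerate: "(\<And>y. Bf x y = 0) \<Longrightarrow> x = 0"
    and Bf_mul: "x \<in> Ag a \<Longrightarrow> y \<in> Ag b \<Longrightarrow> z \<in> Ag c \<Longrightarrow> Bf (mul x y) z = Bf x (mul y z)"
    and Bf_br: "x \<in> Ag a \<Longrightarrow> y \<in> Ag b \<Longrightarrow> z \<in> Ag c \<Longrightarrow> Bf (br x y) z = Bf x (br y z)"
begin

abbreviation "P \<equiv> Pfun scale eps mul br"
abbreviation "T \<equiv> Tfun scale eps mul br"

lemma eps_mult_swap: "eps p q * eps q p = 1"
  and eps_add_right: "eps p (q + r) = eps p q * eps p r"
  and eps_add_left: "eps (p + q) r = eps p r * eps q r"
  using eps_skew_bicharacter unfolding skew_bicharacter_def by blast+

lemma eps_comm_assoc_mul: "eps_comm_assoc scale Ag eps mul"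
  and lie_color_br: "lie_color scale Ag eps br"
  using F_manifold unfolding F_manifold_color_def by blast+

lemma mul_bilinear: "bilinear_op scale mul"
  and mul_homogeneous: "x \<in> Ag a \<Longrightarrow> y \<in> Ag b \<Longrightarrow> mul x y \<in> Ag (a + b)"
  and mul_commute: "x \<in> Ag a \<Longrightarrow> y \<in> Ag b \<Longrightarrow> mul x y = scale (eps a b) (mul y x)"
  using eps_comm_assoc_mul unfolding eps_comm_assoc_def graded_op_def by blast+

lemma br_bilinear: "bilinear_op scale br"
  and br_homogeneous: "x \<in> Ag a \<Longrightarrow> y \<in> Ag b \<Longrightarrow> br x y \<in> Ag (a + b)"
  and br_skew: "x \<in> Ag a \<Longrightarrow> y \<in> Ag b \<Longrightarrow> br x y = - scale (eps a b) (br y x)"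
  using lie_color_br unfolding lie_color_def graded_op_def by blast+

lemma P_mul_Leibniz:
  "x \<in> Ag a \<Longrightarrow> y \<in> Ag b \<Longrightarrow> z \<in> Ag c \<Longrightarrow> w \<in> Ag d \<Longrightarrow>
    P (a + b) c (mul x y) z w = mul x (P b c y z w) + scale (eps a b) (mul y (P a c x z w))"
  using F_manifold unfolding F_manifold_color_def by blast

lemma module_hom_mul_right: "module_hom scale scale (mul x)"
  and module_hom_mul_left: "module_hom scale scale (\<lambda>x. mul x y)"
  and module_hom_br_right: "module_hom scale scale (br x)"
  and module_hom_br_left: "module_hom scale scale (\<lambda>x. br x y)"
  using mul_bilinear br_bilinear unfolding bilinear_op_def linear_iff_module_hom by blast+

lemma module_hom_Bf_right: "module_hom scale (*) (Bf x)"
  and module_hom_Bf_left: "module_hom scale (*) (\<lambda>x. Bf x y)"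
  using Bf_linear_right Bf_linear_left linear_iff_module_hom by blast+

lemmas module_hom_simps = module_hom.add module_hom.diff module_hom.neg module_hom.scale

lemmas bilinear_simps =
  module_hom_simps[OF module_hom_mul_right] module_hom_simps[OF module_hom_mul_left, simplified]
  module_hom_simps[OF module_hom_br_right] module_hom_simps[OF module_hom_br_left, simplified]
  module_hom_simps[OF module_hom_Bf_right] module_hom_simps[OF module_hom_Bf_left, simplified]

lemma P_homogeneous:
  assumes x: "x \<in> Ag a" and y: "y \<in> Ag b" and z: "z \<in> Ag c"
  shows "P a b x y z \<in> Ag (a + b + c)"
proof -
  have "br x (mul y z) \<in> Ag (a + b + c)"
    using br_homogeneous[OF x mul_homogeneous[OF y z]] by (simp add: add.assoc)
  moreover have "mul (br x y) z \<in> Ag (a + b + c)"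
    using mul_homogeneous[OF br_homogeneous[OF x y] z] .
  moreover have "mul y (br x z) \<in> Ag (a + b + c)"
    using mul_homogeneous[OF y br_homogeneous[OF x z]] by (simp add: ac_simps)
  ultimately show ?thesis
    unfolding Pfun_def by (intro subspace_diff subspace_scale subspace_Ag)
qed

lemma T_homogeneous:
  assumes y: "y \<in> Ag b" and z: "z \<in> Ag c" and w: "w \<in> Ag d"
  shows "T b c y z w \<in> Ag (b + c + d)"
proof -
  have "br z (mul y w) \<in> Ag (b + c + d)"
    using br_homogeneous[OF z mul_homogeneous[OF y w]] by (simp add: ac_simps)
  moreover have "br y (mul z w) \<in> Ag (b + c + d)"
    using br_homogeneous[OF y mul_homogeneous[OF z w]] by (simp add: add.assoc)
  moreover have "br (mul y z) w \<in> Ag (b + c + d)"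
    using br_homogeneous[OF mul_homogeneous[OF y z] w] .
  ultimately show ?thesis
    unfolding Tfun_def by (intro subspace_add subspace_diff subspace_neg subspace_scale subspace_Ag)
qed

lemma eq_if_Bf_eq_homogeneous:
  assumes "\<And>g u. u \<in> Ag g \<Longrightarrow> Bf X u = Bf Y u"
  shows "X = Y"
proof -
  have "Bf (X - Y) v = 0" for v
  proof -
    obtain f where f: "\<forall>a. f a \<in> Ag a" "v = (\<Sum>a\<in>{a. f a \<noteq> 0}. f a)"
      using homogeneous_decomposition by blast
    have "Bf (X - Y) v = (\<Sum>a\<in>{a. f a \<noteq> 0}. Bf (X - Y) (f a))"
      unfolding f(2) by (rule module_hom.sum[OF module_hom_Bf_right])
    also have "\<dots> = 0"
      using assms[OF f(1)[rule_format]] by (simp add: bilinear_simps)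
    finally show ?thesis .
  qed
  then have "X - Y = 0" by (rule Bf_nondegenerate)
  then show ?thesis by simp
qed

lemma Bf_mul_left_adjoint:
  assumes x: "x \<in> Ag a" and v: "v \<in> Ag e" and u: "u \<in> Ag g"
  shows "Bf (mul x v) u = eps a e * Bf v (mul x u)"
  using mul_commute[OF x v] Bf_mul[OF v x u] by (simp add: bilinear_simps)

text \<open>Rotating the three factors of an invariant pairing costs eps a (b + c), so the pairing
  vanishes unless that factor is 1.\<close>
lemma Bf_mul_eps_invariant:
  assumes x: "x \<in> Ag a" and y: "y \<in> Ag b" and z: "z \<in> Ag c"
  shows "Bf (mul x y) z = eps a (b + c) * Bf (mul x y) z"
proof -
  have "Bf (mul x y) z = eps a b * Bf y (mul x z)" using Bf_mul_left_adjoint[OF x y z] .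
  also have "Bf y (mul x z) = eps a c * Bf (mul z x) y"
    using mul_commute[OF x z] Bf_sym by (simp add: bilinear_simps)
  also have "Bf (mul z x) y = Bf (mul x y) z" using Bf_mul[OF z x y] Bf_sym by simp
  finally show ?thesis by (simp add: eps_add_right mult.assoc)
qed

lemma Bf_br_eps_invariant:
  assumes x: "x \<in> Ag a" and y: "y \<in> Ag b" and z: "z \<in> Ag c"
  shows "Bf (br x y) z = eps a (b + c) * Bf (br x y) z"
proof -
  have "Bf (br x y) z = - (eps a b * Bf (br y x) z)"
    using br_skew[OF x y] by (simp add: bilinear_simps)
  also have "Bf (br y x) z = Bf (br x z) y" using Bf_br[OF y x z] Bf_sym by simp
  also have "\<dots> = - (eps a c * Bf (br z x) y)" using br_skew[OF x z] by (simp add: bilinear_simps)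
  also have "Bf (br z x) y = Bf (br x y) z" using Bf_br[OF z x y] Bf_sym by simp
  finally show ?thesis by (simp add: eps_add_right mult.assoc)
qed

lemma Bf_T_eps_invariant:
  assumes x: "x \<in> Ag a" and y: "y \<in> Ag b" and z: "z \<in> Ag c" and v: "v \<in> Ag d"
  shows "Bf x (T b c y z v) = eps a (b + c + d) * Bf x (T b c y z v)"
proof -
  have "Bf x (br p q) = eps a (e + f) * Bf x (br p q)" if "p \<in> Ag e" "q \<in> Ag f" for p q e f
    using Bf_br_eps_invariant[OF x that] Bf_br[OF x that] by simp
  then have "Bf x (br z (mul y v)) = eps a (c + (b + d)) * Bf x (br z (mul y v))"
    and "Bf x (br y (mul z v)) = eps a (b + (c + d)) * Bf x (br y (mul z v))"
    and "Bf x (br (mul y z) v) = eps a (b + c + d) * Bf x (br (mul y z) v)"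
    using y z v mul_homogeneous by blast+
  then show ?thesis unfolding Tfun_def
    by (simp add: bilinear_simps eps_add_right) algebra
qed

lemma P_swap:
  assumes x: "x \<in> Ag a" and y: "y \<in> Ag b" and z: "z \<in> Ag c"
  shows "P a b x y z = scale (eps b c) (P a c x z y)"
proof -
  have xz: "br x z \<in> Ag (a + c)" and xy: "br x y \<in> Ag (a + b)"
    using x y z br_homogeneous by blast+
  have "eps b c * eps c b = 1"
    and "eps b c * eps (a + c) b = eps a b"
    and "eps b c * eps a c * eps c (a + b) = 1"
    using eps_mult_swap[of b c] eps_mult_swap[of c a]
    by (simp_all add: eps_add_left eps_add_right algebra_simps)
  then show ?thesis
    unfolding Pfun_def mul_commute[OF z y] mul_commute[OF xz y] mul_commute[OF z xy]
    by (simp add: bilinear_simps scale_right_diff_distrib mult.assoc[symmetric])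
qed

lemma Bf_P_adjoint:
  assumes x: "x \<in> Ag a" and y: "y \<in> Ag b" and z: "z \<in> Ag c" and w: "w \<in> Ag d"
  shows "Bf (P a b x y z) w = eps a b * Bf y (P a c x z w)"
proof -
  have yz: "mul y z \<in> Ag (b + c)" and zw: "mul z w \<in> Ag (c + d)"
    using y z w mul_homogeneous by blast+
  have xw: "br x w \<in> Ag (a + d)" and xy: "br x y \<in> Ag (a + b)" and xz: "br x z \<in> Ag (a + c)"
    using x y z w br_homogeneous by blast+
  have "Bf (br x (mul y z)) w = - (eps a (b + c) * Bf (br (mul y z) x) w)"
    using br_skew[OF x yz] by (simp add: bilinear_simps)
  also have "Bf (br (mul y z) x) w = Bf y (mul z (br x w))"
    using Bf_br[OF yz x w] Bf_mul[OF y z xw] by simp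
  finally have first: "Bf (br x (mul y z)) w = - (eps a (b + c) * Bf y (mul z (br x w)))" .
  have "Bf (mul (br x y) z) w = - (eps a b * Bf (br y x) (mul z w))"
    using Bf_mul[OF xy z w] br_skew[OF x y] by (simp add: bilinear_simps)
  also have "Bf (br y x) (mul z w) = Bf y (br x (mul z w))" using Bf_br[OF y x zw] .
  finally have second: "Bf (mul (br x y) z) w = - (eps a b * Bf y (br x (mul z w)))" .
  show ?thesis
    unfolding Pfun_def using first second Bf_mul[OF y xz w]
    by (simp add: bilinear_simps eps_add_right algebra_simps)
qed

lemma Bf_P_eq_Bf_T:
  assumes x: "x \<in> Ag a" and y: "y \<in> Ag b" and z: "z \<in> Ag c" and v: "v \<in> Ag d"
  shows "Bf (P a b x y z) v = Bf x (T b c y z v)"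
proof -
  have yz: "mul y z \<in> Ag (b + c)" and zv: "mul z v \<in> Ag (c + d)" and yv: "mul y v \<in> Ag (b + d)"
    using y z v mul_homogeneous by blast+
  have xy: "br x y \<in> Ag (a + b)" and xz: "br x z \<in> Ag (a + c)"
    using x y z br_homogeneous by blast+
  have "Bf (mul y (br x z)) v = eps b (a + c) * Bf x (br z (mul y v))"
    using Bf_mul_left_adjoint[OF y xz v] Bf_br[OF x z yv] by simp
  moreover have "eps a b * eps b (a + c) = eps b c"
    using eps_mult_swap[of a b] by (simp add: eps_add_right)
  ultimately show ?thesis
    unfolding Pfun_def Tfun_def using Bf_br[OF x yz v] Bf_mul[OF xy z v] Bf_br[OF x y zv]
    by (simp add: bilinear_simps mult.assoc[symmetric])
qed

lemma Bf_T_eq_Bf_P: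
  assumes y: "y \<in> Ag b" and z: "z \<in> Ag c" and v: "v \<in> Ag d" and u: "u \<in> Ag g"
  shows "Bf (T b c y z v) u = Bf (P g b u y z) v"
  using Bf_P_eq_Bf_T[OF u y z v] Bf_sym by simp

lemma Bf_P_swap_last:
  assumes p: "p \<in> Ag s" and z: "z \<in> Ag c" and w: "w \<in> Ag d" and u: "u \<in> Ag g"
  shows "Bf (P s c p z w) u = eps d g * Bf (P s c p z u) w"
  using Bf_P_adjoint[OF p z w u] Bf_P_adjoint[OF p z u w] P_swap[OF p w u]
  by (simp add: bilinear_simps)

lemma Bf_mul_T_eq_Bf_P:
  assumes x: "x \<in> Ag a" and y: "y \<in> Ag b" and z: "z \<in> Ag c" and w: "w \<in> Ag d" and u: "u \<in> Ag g"
  shows "Bf y (mul x (T c d z w u)) = eps b a * Bf (P (a + b) c (mul x y) z w) u"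
proof -
  have "T c d z w u \<in> Ag (c + d + g)" using T_homogeneous[OF z w u] .
  then have "Bf y (mul x (T c d z w u)) = eps b a * Bf (mul x y) (T c d z w u)"
    using Bf_mul[OF y x] mul_commute[OF y x] by (simp add: bilinear_simps)
  then show ?thesis using Bf_P_eq_Bf_T[OF mul_homogeneous[OF x y] z w u] by simp
qed

lemma mul_P_coherence:
  assumes x: "x \<in> Ag a" and y: "y \<in> Ag b" and z: "z \<in> Ag c" and w: "w \<in> Ag d"
  shows "mul (P a b x y z) w = - scale (eps a (b + c)) (T b c y z (mul x w)) + mul x (T b c y z w)"
proof (rule eq_if_Bf_eq_homogeneous)
  fix g u assume u: "u \<in> Ag g"
  have wu: "mul w u \<in> Ag (d + g)" and xu: "mul x u \<in> Ag (a + g)" and xw: "mul x w \<in> Ag (a + d)"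
    using x w u mul_homogeneous by blast+
  have Pxyz: "P a b x y z \<in> Ag (a + b + c)" and Puyz: "P g b u y z \<in> Ag (g + b + c)"
    using P_homogeneous x y z u by blast+
  have Tyzw: "T b c y z w \<in> Ag (b + c + d)" using T_homogeneous[OF y z w] .
  define L where "L = Bf x (T b c y z (mul w u))"
  define M where "M = Bf (P g b u y z) (mul x w)"
  have lhs: "Bf (mul (P a b x y z) w) u = L"
    unfolding L_def using Bf_mul[OF Pxyz w u] Bf_P_eq_Bf_T[OF x y z wu] by simp
  have rhs1: "Bf (T b c y z (mul x w)) u = M"
    unfolding M_def using Bf_T_eq_Bf_P[OF y z xw u] .
  have "Bf (mul x (T b c y z w)) u = eps a (b + c + d) * Bf (P (a + g) b (mul x u) y z) w"
    using Bf_mul_left_adjoint[OF x Tyzw u] Bf_T_eq_Bf_P[OF y z w xu] by simp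
  also have "Bf (P (a + g) b (mul x u) y z) w = eps a (g + b + c) * M + eps a g * L"
    using P_mul_Leibniz[OF x u y z] Bf_mul_left_adjoint[OF x Puyz w] Bf_mul[OF u Pxyz w] Bf_sym lhs
    by (simp add: bilinear_simps M_def)
  finally have rhs2:
    "Bf (mul x (T b c y z w)) u = eps a (b + c + d) * (eps a (g + b + c) * M + eps a g * L)" .
  have "M = eps a (d + (g + b + c)) * M"
    unfolding M_def using Bf_mul_eps_invariant[OF x w Puyz] Bf_sym by metis
  moreover have "L = eps a (b + c + (d + g)) * L"
    unfolding L_def using Bf_T_eps_invariant[OF x y z wu] .
  moreover have "Bf (- scale (eps a (b + c)) (T b c y z (mul x w)) + mul x (T b c y z w)) u
      = - (eps a (b + c) * M) + eps a (b + c + d) * (eps a (g + b + c) * M + eps a g * L)"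
    using rhs1 rhs2 by (simp add: bilinear_simps)
  ultimately show "Bf (mul (P a b x y z) w) u
      = Bf (- scale (eps a (b + c)) (T b c y z (mul x w)) + mul x (T b c y z w)) u"
    using lhs unfolding eps_add_right by algebra
qed

lemma P_mul_coherence:
  assumes x: "x \<in> Ag a" and y: "y \<in> Ag b" and z: "z \<in> Ag c" and w: "w \<in> Ag d"
  shows "P (a + b) c (mul x y) z w
    = scale (eps a (b + c)) (P b c y z (mul x w)) + scale (eps b c) (P a c x z (mul y w))"
proof (rule eq_if_Bf_eq_homogeneous)
  fix g u assume u: "u \<in> Ag g"
  have xw: "mul x w \<in> Ag (a + d)" and yw: "mul y w \<in> Ag (b + d)" and xy: "mul x y \<in> Ag (a + b)"
    using x y w mul_homogeneous by blast+
  have Pxzu: "P a c x z u \<in> Ag (a + c + g)" using P_homogeneous[OF x z u] .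
  have Tzuw: "T c g z u w \<in> Ag (c + g + d)" using T_homogeneous[OF z u w] .
  define \<alpha> where "\<alpha> = Bf y (T c g z u (mul x w))"
  define X where "X = Bf (P (a + b) c (mul x y) z u) w"
  have lhs: "Bf (P (a + b) c (mul x y) z w) u = eps d g * X"
    unfolding X_def using Bf_P_swap_last[OF xy z w u] .
  have rhs1: "Bf (P b c y z (mul x w)) u = eps (a + d) g * \<alpha>"
    unfolding \<alpha>_def using Bf_P_swap_last[OF y z xw u] Bf_P_eq_Bf_T[OF y z u xw] by simp
  have "Bf (P a c x z (mul y w)) u = eps (b + d) g * Bf (P a c x z u) (mul y w)"
    using Bf_P_swap_last[OF x z yw u] .
  also have "Bf (P a c x z u) (mul y w) = eps b d * Bf (mul (P a c x z u) w) y"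
    using mul_commute[OF y w] Bf_mul[OF Pxzu w y] by (simp add: bilinear_simps)
  also have "Bf (mul (P a c x z u) w) y = - (eps a (c + g) * \<alpha>) + eps b a * X"
    unfolding \<alpha>_def X_def using mul_P_coherence[OF x z u w] Bf_mul_T_eq_Bf_P[OF x y z u w] Bf_sym
    by (simp add: bilinear_simps)
  finally have rhs2: "Bf (P a c x z (mul y w)) u
      = eps (b + d) g * (eps b d * (- (eps a (c + g) * \<alpha>) + eps b a * X))" .
  have "X = eps a b * Bf (mul y x) (T c g z u w)"
    unfolding X_def using Bf_P_eq_Bf_T[OF xy z u w] mul_commute[OF x y]
    by (simp add: bilinear_simps)
  then have "X = eps b (a + (c + g + d)) * X"
    using Bf_mul_eps_invariant[OF y x Tzuw] by (metis mult.left_commute)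
  moreover have "\<alpha> = eps b (c + g + (a + d)) * \<alpha>"
    unfolding \<alpha>_def using Bf_T_eps_invariant[OF y z u xw] .
  moreover note eps_mult_swap[of a b]
  ultimately have "eps a (b + c) * (eps (a + d) g * \<alpha>)
      + eps b c * (eps (b + d) g * (eps b d * (- (eps a (c + g) * \<alpha>) + eps b a * X)))
      = eps d g * X"
    unfolding eps_add_right eps_add_left by algebra
  with lhs rhs1 rhs2 show "Bf (P (a + b) c (mul x y) z w) u
      = Bf (scale (eps a (b + c)) (P b c y z (mul x w)) + scale (eps b c) (P a c x z (mul y w))) u"
    by (simp add: bilinear_simps)
qed

end

theorem proposition3p8:
  fixes scale :: "'k::field_char_0 \<Rightarrow> 'v::ab_group_add \<Rightarrow> 'v"
    and Ag :: "'g::ab_group_add \<Rightarrow> 'v set"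
    and eps :: "'g \<Rightarrow> 'g \<Rightarrow> 'k"
    and mul br :: "'v \<Rightarrow> 'v \<Rightarrow> 'v"
    and Bf :: "'v \<Rightarrow> 'v \<Rightarrow> 'k"
  assumes "alg_closed_field TYPE('k)"
    and "skew_bicharacter eps"
    and "fd_graded_space scale Ag"
    and "F_manifold_color scale Ag eps mul br"
    and "\<forall>x. Vector_Spaces.linear scale (*) (Bf x)"
    and "\<forall>y. Vector_Spaces.linear scale (*) (\<lambda>x. Bf x y)"
    and "\<forall>x y. Bf x y = Bf y x"
    and "\<forall>x. (\<forall>y. Bf x y = 0) \<longrightarrow> x = 0"
    and "\<forall>a b c x y z. x \<in> Ag a \<longrightarrow> y \<in> Ag b \<longrightarrow> z \<in> Ag c \<longrightarrow>
           Bf (mul x y) z = Bf x (mul y z)"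
    and "\<forall>a b c x y z. x \<in> Ag a \<longrightarrow> y \<in> Ag b \<longrightarrow> z \<in> Ag c \<longrightarrow>
           Bf (br x y) z = Bf x (br y z)"
  shows "coherence_F_manifold_color scale Ag eps mul br"
proof -
  have graded: "vector_space scale" "module.subspace scale (Ag a)"
    "\<exists>f. (\<forall>a. f a \<in> Ag a) \<and> finite {a. f a \<noteq> 0} \<and> x = (\<Sum>a\<in>{a. f a \<noteq> 0}. f a)" for a x
    using assms(3) unfolding fd_graded_space_def by (blast, blast, meson ex1_implies_ex)
  interpret F_manifold_color_invariant_form scale Ag eps mul br Bf
    by (intro F_manifold_color_invariant_form.intro F_manifold_color_invariant_form_axioms.intro
        graded) (use assms in blast)+
  show ?thesis
    unfolding coherence_F_manifold_color_def
    using F_manifold P_mul_coherence mul_P_coherence by blast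
qed

end
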